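(* Let $1\le p<\infty$ and for each positive integer $k$ let $Q_k=1-k+\dfrac{k^{1+1/p}}{(k+1)^{1/p}}$. Then $1-p^{-1}\le Q_k\le 2^{-1/p}$ for every positive integer $k$. *)

theory Defs
  imports Complex_Main
begin

end

theory Submission
  imports Defs "HOL-Analysis.Analysis"
begin

text \<open>With \<open>a = -1/p\<close> and \<open>t = 1/k\<close> one has \<open>Q\<^sub>k = 1 - k + k (1 + t) powr a\<close>, and
  \<open>s \<mapsto> (1 + s) powr a\<close> is convex. Its tangent at \<open>s = 0\<close> gives
  \<open>(1 + t) powr a \<ge> 1 + a t\<close>, i.e. \<open>Q\<^sub>k \<ge> 1 + a\<close>; its chord over \<open>[0, 1]\<close> gives
  \<open>(1 + t) powr a \<le> 1 - t + t 2 powr a\<close>, i.e. \<open>Q\<^sub>k \<le> 2 powr a\<close>.\<close>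

lemma convex_on_powr_nonpos:
  fixes a :: real
  assumes "a \<le> 0"
  shows "convex_on {0<..} (\<lambda>x. x powr a)"
proof (rule f''_ge0_imp_convex)
  show "((\<lambda>x. x powr a) has_real_derivative a * x powr (a - 1)) (at x)" if "x \<in> {0<..}" for x
    using that by (auto intro!: derivative_eq_intros)
  show "((\<lambda>x. a * x powr (a - 1)) has_real_derivative a * ((a - 1) * x powr (a - 2))) (at x)"
    if "x \<in> {0<..}" for x
    using that by (auto intro!: derivative_eq_intros simp: diff_diff_eq)
  show "0 \<le> a * ((a - 1) * x powr (a - 2))" if "x \<in> {0<..}" for x
    using assms by (intro mult_nonpos_nonpos mult_nonpos_nonneg) auto
qed auto

lemma Bernoulli_inequality_powr_nonpos:
  fixes a x :: real
  assumes "a \<le> 0" and "-1 < x"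
  shows "1 + a * x \<le> (1 + x) powr a"
proof -
  have "a * ((1 + x) - 1) \<le> (1 + x) powr a - 1 powr a"
  proof (rule convex_on_imp_above_tangent[OF convex_on_powr_nonpos[OF assms(1)]])
    show "connected {0::real<..}"
      by (simp add: convex_connected)
    show "(1::real) \<in> interior {0<..}"
      by (simp add: interior_open)
    show "1 + x \<in> {0<..}"
      using assms(2) by simp
    show "((\<lambda>y. y powr a) has_field_derivative a) (at 1 within {0<..})"
      by (auto intro!: derivative_eq_intros)
  qed
  then show ?thesis
    by simp
qed

lemma powr_nonpos_le_chord:
  fixes a t :: real
  assumes "a \<le> 0" and "0 \<le> t" and "t \<le> 1"
  shows "(1 + t) powr a \<le> 1 - t + t * 2 powr a"
proof -
  have "convex_on {1..2} (\<lambda>x. x powr a)"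
    using convex_on_powr_nonpos[OF assms(1)] by (rule convex_on_subset) auto
  from convex_onD_Icc'[OF this, of "1 + t"] assms show ?thesis
    by (simp add: algebra_simps)
qed

lemma powr_div_succ_powr_eq:
  fixes p :: real and k :: nat
  assumes "k \<ge> 1"
  shows "real k powr (1 + 1 / p) / real (k + 1) powr (1 / p)
       = real k * (1 + 1 / real k) powr (- 1 / p)"
  using assms
  by (simp add: powr_add powr_minus powr_divide field_simps)

theorem lemma5p8:
  fixes p :: real and k :: nat
  assumes "1 \<le> p" and "k \<ge> 1"
  shows "1 - 1 / p \<le> 1 - real k + real k powr (1 + 1 / p) / real (k + 1) powr (1 / p)
       \<and> 1 - real k + real k powr (1 + 1 / p) / real (k + 1) powr (1 / p) \<le> 2 powr (- 1 / p)"
proof -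
  define a where "a = - 1 / p"
  define t where "t = 1 / real k"
  have a: "a \<le> 0" and t: "0 < t" "t \<le> 1" and kt: "real k * t = 1"
    using assms by (auto simp: a_def t_def)
  have Q: "real k powr (1 + 1 / p) / real (k + 1) powr (1 / p) = real k * (1 + t) powr a"
    using powr_div_succ_powr_eq[OF assms(2)] by (simp add: a_def t_def)
  have lower: "real k + a \<le> real k * (1 + t) powr a"
  proof -
    have "real k + a = real k * (1 + a * t)"
      using kt by (simp add: ring_distribs flip: mult.assoc)
    also have "\<dots> \<le> real k * (1 + t) powr a"
      using Bernoulli_inequality_powr_nonpos[OF a, of t] t by (intro mult_left_mono) auto
    finally show ?thesis .
  qed
  have upper: "real k * (1 + t) powr a \<le> real k - 1 + 2 powr a"
  proof -
    have "real k * (1 + t) powr a \<le> real k * (1 - t + t * 2 powr a)"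
      using powr_nonpos_le_chord[OF a] t by (intro mult_left_mono) auto
    also have "\<dots> = real k - 1 + 2 powr a"
      using kt by (simp add: ring_distribs flip: mult.assoc)
    finally show ?thesis .
  qed
  have "1 - 1 / p = 1 + a"
    by (simp add: a_def)
  then show ?thesis
    using lower upper unfolding Q a_def[symmetric] by linarith
qed

end
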